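(* Under Total Store Order, $\lim_{i\to\infty}\Pr[\text{the instruction at position } i \text{ of } S_i \text{ has type } \mathrm{ST}]=2/3$ (where $m\ge i$).
   Context: Fix $m\ge 1$. A random program is a sequence $x_1,\dots,x_{m+2}$ of memory operations, each with a type in $\{\mathrm{LD},\mathrm{ST}\}$: $x_1,\dots,x_m$ have i.i.d. types, each $\mathrm{ST}$ with probability $1/2$ and $\mathrm{LD}$ with probability $1/2$; $x_{m+1}$ (the critical load) has type $\mathrm{LD}$ and $x_{m+2}$ (the critical store) has type $\mathrm{ST}$. The initial order is $S_0=(x_1,\dots,x_{m+2})$. A memory model is specified by the set of ordered type pairs $(\tau_1,\tau_2)$ for which an instruction of type $\tau_2$ may be moved ahead of an immediately preceding instruction of type $\tau_1$: Sequential Consistency (SC) allows no pair; Total Store Order (TSO) allows only the pair $(\mathrm{ST},\mathrm{LD})$ (a load may move ahead of a preceding store); Weak Ordering (WO) allows all four pairs. The settling process runs rounds $r=1,\dots,m+2$. Before round $r$, the current order $S_{r-1}$ consists of $x_1,\dots,x_{r-1}$ in some order in positions $1,\dots,r-1$, followed by $x_r,\dots,x_{m+2}$ in positions $r,\dots,m+2$. In round $r$, instruction $x_r$ (starting at position $r$) repeatedly attempts to swap with the instruction immediately preceding it in the current order: the attempt fails automatically if the pair (type of the preceding instruction, type of $x_r$) is not allowed by the memory model, or if $x_r$ is the critical store and the preceding instruction is the critical load; otherwise the attempt succeeds independently with probability $1/2$. The round ends when an attempt fails or $x_r$ reaches position $1$; the resulting order is $S_r$. *)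

theory Defs
  imports "HOL-Probability.Probability"
begin

datatype ity = LD | ST

text \<open>A memory model: the set of allowed ordered type pairs (preceding type, moving type).\<close>
type_synonym mmodel = "ity \<Rightarrow> ity \<Rightarrow> bool"

definition SC :: mmodel where "SC = (\<lambda>_ _. False)"
definition TSO :: mmodel where "TSO = (\<lambda>a b. a = ST \<and> b = LD)"
definition WO :: mmodel where "WO = (\<lambda>_ _. True)"

text \<open>i.i.d. uniform types for x_1..x_n (list entry k-1 is the type of x_k).\<close>
fun rand_types :: "nat \<Rightarrow> ity list pmf" where
  "rand_types 0 = return_pmf []"
| "rand_types (Suc n) =
     bind_pmf (bernoulli_pmf (1/2)) (\<lambda>b.
     bind_pmf (rand_types n) (\<lambda>ts. return_pmf ((if b then ST else LD) # ts)))"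

text \<open>Type of instruction x_k (labels 1..m+2): x_{m+1} critical load, x_{m+2} critical store.\<close>
definition ty_of :: "nat \<Rightarrow> ity list \<Rightarrow> nat \<Rightarrow> ity" where
  "ty_of m ts k = (if k \<le> m then ts ! (k - 1) else if k = m + 1 then LD else ST)"

text \<open>The moving instruction sits at 0-based list index p and repeatedly attempts to
  swap with its predecessor.  Orders are lists of instruction labels.\<close>
fun settle :: "mmodel \<Rightarrow> (nat \<Rightarrow> ity) \<Rightarrow> nat \<Rightarrow> nat list \<Rightarrow> nat \<Rightarrow> nat list pmf" where
  "settle A ty m xs 0 = return_pmf xs"
| "settle A ty m xs (Suc p) =
     (let y = xs ! p; x = xs ! Suc p in
      if \<not> A (ty y) (ty x) \<or> (x = m + 2 \<and> y = m + 1) then return_pmf xs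
      else bind_pmf (bernoulli_pmf (1/2)) (\<lambda>b.
             if b then settle A ty m (xs[p := x, Suc p := y]) p else return_pmf xs))"

text \<open>The order S_r after rounds 1..r (S_0 = (x_1,...,x_{m+2})).  In round r+1,
  x_{r+1} starts at 1-based position r+1, i.e. 0-based index r.\<close>
fun run :: "mmodel \<Rightarrow> (nat \<Rightarrow> ity) \<Rightarrow> nat \<Rightarrow> nat \<Rightarrow> nat list pmf" where
  "run A ty m 0 = return_pmf [1..<m + 3]"
| "run A ty m (Suc r) = bind_pmf (run A ty m r) (\<lambda>s. settle A ty m s r)"

definition pos_type :: "mmodel \<Rightarrow> nat \<Rightarrow> nat \<Rightarrow> ity pmf" where
  "pos_type A m i =
     bind_pmf (rand_types m) (\<lambda>ts.
     map_pmf (\<lambda>s. ty_of m ts (s ! (i - 1))) (run A (ty_of m ts) m i))"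

end

theory Submission imports Defs begin

(*
  Under TSO an instruction may only move ahead of a store, and only if it is a load.
  Hence in round r+1 the instruction x_{r+1} stays at position r+1 when it is a store,
  and when it is a load it swaps (with probability 1/2) only if the instruction at
  position r of S_r is a store, in which case that store lands at position r+1.
  Writing p_r for the probability that position r of S_r holds a store, this gives
  p_{r+1} = 1 if x_{r+1} is a store and p_{r+1} = p_r / 2 otherwise.  So, given the
  types t_1,...,t_i, the probability is the left fold  st_chance [t_1,...,t_i]  of
  this recursion, and averaging over i.i.d. fair types yields E_{i} = 1/2 + E_{i-1}/4,
  i.e. E_i = 2/3 - 2/3 (1/4)^i, which tends to 2/3.  Since i <= m, only the random
  instructions x_1,...,x_i are involved; the critical pair never plays a role.
*)

definition type_of_bit :: "bool \<Rightarrow> ity" where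
  "type_of_bit b = (if b then ST else LD)"

definition coin_type :: "ity pmf" where
  "coin_type = map_pmf type_of_bit (bernoulli_pmf (1/2))"

lemma pmf_coin_type: "pmf coin_type t = 1/2"
proof -
  have inj: "inj type_of_bit" by (auto simp: inj_def type_of_bit_def split: if_splits)
  have "t = type_of_bit (t = ST)" by (cases t) (auto simp: type_of_bit_def)
  then show ?thesis unfolding coin_type_def by (metis pmf_map_inj' inj pmf_bernoulli_half)
qed

lemma integral_coin_type:
  fixes g :: "ity \<Rightarrow> real"
  shows "(\<integral>t. g t \<partial>coin_type) = (g ST + g LD) / 2"
  by (simp add: coin_type_def type_of_bit_def)

lemma rand_types_replicate: "rand_types n = replicate_pmf n coin_type"
  by (induction n) (simp_all add: coin_type_def type_of_bit_def map_pmf_def bind_assoc_pmf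
      bind_return_pmf)

lemma replicate_pmf_take:
  assumes "i \<le> n"
  shows "map_pmf (take i) (replicate_pmf n p) = replicate_pmf i p"
proof -
  obtain k where n: "n = i + k" using assms le_Suc_ex by blast
  have "map_pmf (take i) (replicate_pmf n p) =
      bind_pmf (replicate_pmf i p) (\<lambda>xs. map_pmf (\<lambda>_. xs) (replicate_pmf k p))"
    unfolding n replicate_pmf_distrib map_bind_pmf
    by (intro bind_pmf_cong refl) (auto simp: map_pmf_def bind_return_pmf set_replicate_pmf)
  then show ?thesis by (simp add: map_pmf_const bind_return_pmf')
qed

lemma replicate_pmf_snoc:
  "replicate_pmf (Suc n) p = bind_pmf (replicate_pmf n p) (\<lambda>xs. map_pmf (\<lambda>x. xs @ [x]) p)"
  using replicate_pmf_distrib[of n 1 p]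
  by (simp add: replicate_pmf_1 map_pmf_def bind_assoc_pmf bind_return_pmf)

lemma integral_bind_pmf_bounded:
  fixes f :: "'b \<Rightarrow> real"
  assumes nonneg: "\<And>y. 0 \<le> f y" and bound: "\<And>y. f y \<le> B"
  shows "(\<integral>y. f y \<partial>bind_pmf M N) = (\<integral>x. \<integral>y. f y \<partial>N x \<partial>M)"
proof -
  have int: "integrable (measure_pmf P) f" for P :: "'b pmf"
    by (rule measure_pmf.integrable_const_bound[where B = B]) (use nonneg bound in auto)
  have int2: "integrable (measure_pmf M) (\<lambda>x. \<integral>y. f y \<partial>N x)"
    by (rule measure_pmf.integrable_const_bound[where B = B])
       (auto simp: nonneg bound integral_nonneg measure_pmf.integral_le_const int)
  have "ennreal (\<integral>y. f y \<partial>bind_pmf M N) = (\<integral>\<^sup>+y. f y \<partial>bind_pmf M N)"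
    by (rule nn_integral_eq_integral[symmetric]) (auto simp: int nonneg)
  also have "\<dots> = (\<integral>\<^sup>+x. \<integral>\<^sup>+y. f y \<partial>N x \<partial>M)"
    by (rule nn_integral_bind_pmf)
  also have "\<dots> = (\<integral>\<^sup>+x. ennreal (\<integral>y. f y \<partial>N x) \<partial>M)"
    by (simp add: nn_integral_eq_integral int nonneg)
  also have "\<dots> = ennreal (\<integral>x. \<integral>y. f y \<partial>N x \<partial>M)"
    by (simp add: nn_integral_eq_integral int2 nonneg integral_nonneg)
  finally show ?thesis
    by (simp add: nonneg integral_nonneg)
qed

text \<open>The one-round recursion for the probability of a store at the frontier, and its
  iterate over a list of instruction types.\<close>

definition st_step :: "real \<Rightarrow> ity \<Rightarrow> real" where
  "st_step q t = (if t = ST then 1 else q / 2)"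

definition st_chance :: "ity list \<Rightarrow> real" where
  "st_chance ts = foldl st_step 0 ts"

lemma st_chance_snoc: "st_chance (ts @ [t]) = st_step (st_chance ts) t"
  by (simp add: st_chance_def)

lemma st_chance_bounds: "0 \<le> st_chance ts \<and> st_chance ts \<le> 1"
proof -
  have "0 \<le> q \<Longrightarrow> q \<le> 1 \<Longrightarrow> 0 \<le> foldl st_step q ts \<and> foldl st_step q ts \<le> 1" for q
    by (induction ts arbitrary: q) (auto simp: st_step_def)
  then show ?thesis by (simp add: st_chance_def)
qed

text \<open>Averaged over n fair types, st_chance satisfies E_{n+1} = 1/2 + E_n / 4.\<close>

lemma expected_st_chance:
  "(\<integral>ts. st_chance ts \<partial>replicate_pmf n coin_type) = 2/3 - 2/3 * (1/4) ^ n"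
proof (induction n)
  case 0
  then show ?case by (simp add: st_chance_def)
next
  case (Suc n)
  have int: "integrable (measure_pmf P) st_chance" for P :: "ity list pmf"
    by (rule measure_pmf.integrable_const_bound[where B = 1]) (use st_chance_bounds in auto)
  have "(\<integral>ts. st_chance ts \<partial>replicate_pmf (Suc n) coin_type) =
      (\<integral>ts. (1 + st_chance ts / 2) / 2 \<partial>replicate_pmf n coin_type)"
    unfolding replicate_pmf_snoc
    by (subst integral_bind_pmf_bounded[where B = 1])
       (simp_all add: st_chance_bounds st_chance_snoc integral_coin_type st_step_def)
  also have "\<dots> = 1/2 + (\<integral>ts. st_chance ts \<partial>replicate_pmf n coin_type) / 4"
    by (simp add: int)
  finally show ?case using Suc.IH by (simp add: field_simps)
qed

lemma settle_frame:
  assumes "p < length xs" "s \<in> set_pmf (settle A ty m xs p)"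
  shows "length s = length xs \<and> (\<forall>k. p < k \<longrightarrow> k < length xs \<longrightarrow> s ! k = xs ! k)"
  using assms
proof (induction p arbitrary: xs)
  case (Suc p)
  show ?case
  proof (cases "\<not> A (ty (xs ! p)) (ty (xs ! Suc p)) \<or> (xs ! Suc p = m + 2 \<and> xs ! p = m + 1)")
    case True
    then have "settle A ty m xs (Suc p) = return_pmf xs"
      by (simp only: settle.simps Let_def if_True)
    then show ?thesis using Suc.prems by simp
  next
    case False
    with Suc.prems(2) consider "s = xs"
      | "s \<in> set_pmf (settle A ty m (xs[p := xs ! Suc p, Suc p := xs ! p]) p)"
      by (auto simp: Let_def split: if_splits)
    then show ?thesis
    proof cases
      case 2
      with Suc.IH[OF _ 2] Suc.prems(1) show ?thesis by auto
    qed simp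
  qed
qed simp

lemma run_frame:
  assumes "r \<le> m + 2" "s \<in> set_pmf (run A ty m r)"
  shows "length s = m + 2 \<and> (\<forall>k. r \<le> k \<longrightarrow> k < m + 2 \<longrightarrow> s ! k = Suc k)"
  using assms
proof (induction r arbitrary: s)
  case (Suc r)
  then obtain s0 where s0: "s0 \<in> set_pmf (run A ty m r)" "s \<in> set_pmf (settle A ty m s0 r)"
    by auto
  with Suc.IH[OF _ s0(1)] Suc.prems(1) show ?case
    using settle_frame[OF _ s0(2)] by auto
qed simp

definition top_type :: "mmodel \<Rightarrow> (nat \<Rightarrow> ity) \<Rightarrow> nat \<Rightarrow> nat \<Rightarrow> ity pmf" where
  "top_type A ty m r = map_pmf (\<lambda>s. ty (s ! r)) (run A ty m (Suc r))"

lemma top_type_0: "top_type A ty m 0 = return_pmf (ty 1)"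
  by (simp add: top_type_def bind_return_pmf')

lemma settle_TSO_frontier:
  assumes "Suc p < length xs" "xs ! Suc p \<noteq> m + 2"
  shows "map_pmf (\<lambda>s. ty (s ! Suc p)) (settle TSO ty m xs (Suc p)) =
    (if ty (xs ! Suc p) = LD \<and> ty (xs ! p) = ST then coin_type
     else return_pmf (ty (xs ! Suc p)))"
proof (cases "ty (xs ! Suc p) = LD \<and> ty (xs ! p) = ST")
  case True
  let ?swapped = "xs[p := xs ! Suc p, Suc p := xs ! p]"
  have "map_pmf (\<lambda>s. ty (s ! Suc p)) (settle TSO ty m ?swapped p) = return_pmf ST"
    unfolding map_pmf_eq_return_pmf_iff
  proof
    fix s assume "s \<in> set_pmf (settle TSO ty m ?swapped p)"
    with settle_frame[OF _ this] assms(1) have "s ! Suc p = xs ! p" by auto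
    then show "ty (s ! Suc p) = ST" using True by simp
  qed
  then have "map_pmf (\<lambda>s. ty (s ! Suc p)) (settle TSO ty m xs (Suc p)) =
      bind_pmf (bernoulli_pmf (1/2)) (\<lambda>b. return_pmf (type_of_bit b))"
    using True assms by (auto simp: Let_def TSO_def map_bind_pmf type_of_bit_def
        intro!: bind_pmf_cong)
  then show ?thesis using True by (simp add: coin_type_def map_pmf_def)
qed (use assms in \<open>auto simp: Let_def TSO_def\<close>)

lemma top_type_Suc:
  assumes "Suc (Suc r) \<le> m"
  shows "top_type TSO ty m (Suc r) = bind_pmf (top_type TSO ty m r) (\<lambda>t.
    if ty (Suc (Suc r)) = LD \<and> t = ST then coin_type else return_pmf (ty (Suc (Suc r))))"
proof -
  have "map_pmf (\<lambda>s. ty (s ! Suc r)) (settle TSO ty m s (Suc r)) =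
      (if ty (Suc (Suc r)) = LD \<and> ty (s ! r) = ST then coin_type
       else return_pmf (ty (Suc (Suc r))))"
    if "s \<in> set_pmf (run TSO ty m (Suc r))" for s
    using run_frame[OF _ that] assms by (subst settle_TSO_frontier) auto
  then show ?thesis
    unfolding top_type_def run.simps(2)[of _ _ _ "Suc r"] map_bind_pmf bind_map_pmf
    by (intro bind_pmf_cong) simp_all
qed

lemma pmf_top_type_Suc:
  assumes "Suc (Suc r) \<le> m"
  shows "pmf (top_type TSO ty m (Suc r)) ST =
    st_step (pmf (top_type TSO ty m r) ST) (ty (Suc (Suc r)))"
proof (cases "ty (Suc (Suc r))")
  case LD
  have "pmf (top_type TSO ty m (Suc r)) ST =
      (\<integral>t. 1/2 * indicator {ST} t \<partial>top_type TSO ty m r)"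
    unfolding top_type_Suc[OF assms] pmf_bind using LD
    by (intro Bochner_Integration.integral_cong) (auto simp: pmf_coin_type)
  then show ?thesis using LD by (simp add: st_step_def measure_pmf_single)
qed (simp add: top_type_Suc[OF assms] pmf_bind st_step_def)

lemma pmf_top_type:
  assumes "length ts = m" "Suc r \<le> m"
  shows "pmf (top_type TSO (ty_of m ts) m r) ST = st_chance (take (Suc r) ts)"
  using assms(2)
proof (induction r)
  case 0
  then show ?case using assms(1)
    by (cases ts) (auto simp: top_type_0 ty_of_def st_chance_def st_step_def)
next
  case (Suc r)
  have "take (Suc (Suc r)) ts = take (Suc r) ts @ [ts ! Suc r]"
    using Suc.prems assms(1) by (simp add: take_Suc_conv_app_nth)
  then show ?case using Suc assms(1)
    by (simp add: pmf_top_type_Suc st_chance_snoc ty_of_def)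
qed

lemma pos_type_TSO:
  assumes "Suc r \<le> m"
  shows "pmf (pos_type TSO m (Suc r)) ST = 2/3 - 2/3 * (1/4) ^ Suc r"
proof -
  have "pmf (pos_type TSO m (Suc r)) ST =
      (\<integral>ts. st_chance (take (Suc r) ts) \<partial>rand_types m)"
    unfolding pos_type_def pmf_bind
    by (intro integral_cong_AE)
       (auto simp: AE_measure_pmf_iff rand_types_replicate set_replicate_pmf assms
         pmf_top_type[symmetric] top_type_def)
  also have "\<dots> = (\<integral>ts. st_chance ts \<partial>map_pmf (take (Suc r)) (replicate_pmf m coin_type))"
    by (simp add: rand_types_replicate)
  also have "\<dots> = 2/3 - 2/3 * (1/4) ^ Suc r"
    by (simp only: replicate_pmf_take[OF assms] expected_st_chance)
  finally show ?thesis .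
qed

theorem claim1:
  fixes f :: "nat \<Rightarrow> nat"
  assumes "\<And>i. i \<le> f i" and "\<And>i. 1 \<le> f i"
  shows "(\<lambda>i. pmf (pos_type TSO (f i) i) ST) \<longlonglongrightarrow> 2/3"
proof (rule Lim_transform_eventually)
  show "(\<lambda>i. 2/3 - 2/3 * (1/4::real) ^ i) \<longlonglongrightarrow> 2/3"
    by (auto intro!: tendsto_eq_intros LIMSEQ_power_zero)
  show "\<forall>\<^sub>F i in sequentially. 2/3 - 2/3 * (1/4::real) ^ i = pmf (pos_type TSO (f i) i) ST"
  proof (rule eventually_sequentiallyI[of 1])
    fix i :: nat assume "1 \<le> i"
    then obtain r where "i = Suc r" by (cases i) auto
    then show "2/3 - 2/3 * (1/4::real) ^ i = pmf (pos_type TSO (f i) i) ST"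
      using pos_type_TSO[of r "f i"] assms(1)[of i] by simp
  qed
qed

end
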